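(* Let $[\cdot]_{\mathbb{R}}:\mathbb{C}^d\to\mathbb{R}^{2d}$ be the map $v\mapsto\begin{pmatrix}\operatorname{Re}v\\ \operatorname{Im}v\end{pmatrix}$. Let $v_1,\dots,v_n\in\mathbb{C}^d$. (1) If $([v_1]_{\mathbb{R}},\dots,[v_n]_{\mathbb{R}})$ is a tight frame for $\mathbb{R}^{2d}$, then $(v_1,\dots,v_n)$ is a tight frame for $\mathbb{C}^d$. (2) If $(v_1,\dots,v_n)$ is a tight frame for $\mathbb{C}^d$, then $([v_j]_{\mathbb{R}})_{j=1}^n$ is a tight frame for $\mathbb{R}^{2d}$ if and only if $$\sum_j\sum_k\langle v_j,v_k\rangle^2=0,$$ equivalently, if and only if $\sum_j\sum_k(\operatorname{Re}\langle v_j,v_k\rangle)^2=\sum_j\sum_k(\operatorname{Im}\langle v_j,v_k\rangle)^2$.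
   Context: $\operatorname{Re}v,\operatorname{Im}v\in\mathbb{R}^d$ are the entrywise real and imaginary parts of $v\in\mathbb{C}^d$. Inner products are Euclidean: $\langle v,w\rangle=\sum_j\overline{w_j}v_j$. A sequence $(u_j)$ in $\mathbb{F}^D$ is a tight frame for $\mathbb{F}^D$ if there is $A>0$ with $A\|u\|^2=\sum_j|\langle u,u_j\rangle|^2$ for all $u\in\mathbb{F}^D$. *)

theory Defs
  imports "HOL-Analysis.Analysis"
begin

definition cinner :: "complex ^ 'd \<Rightarrow> complex ^ 'd \<Rightarrow> complex" where
  "cinner v w = (\<Sum>j\<in>UNIV. cnj (w $ j) * v $ j)"

definition realify :: "complex ^ 'd \<Rightarrow> real ^ ('d + 'd)" where
  "realify v = (\<chi> i. case i of Inl j \<Rightarrow> Re (v $ j) | Inr j \<Rightarrow> Im (v $ j))"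

definition tight_frame_C :: "nat \<Rightarrow> (nat \<Rightarrow> complex ^ 'd) \<Rightarrow> bool" where
  "tight_frame_C n u \<longleftrightarrow> (\<exists>A>0. \<forall>x :: complex ^ 'd.
      A * (norm x)\<^sup>2 = (\<Sum>j<n. (cmod (cinner x (u j)))\<^sup>2))"

definition tight_frame_R :: "nat \<Rightarrow> (nat \<Rightarrow> real ^ 'n) \<Rightarrow> bool" where
  "tight_frame_R n u \<longleftrightarrow> (\<exists>A>0. \<forall>x :: real ^ 'n.
      A * (norm x)\<^sup>2 = (\<Sum>j<n. \<bar>x \<bullet> u j\<bar>\<^sup>2))"

end

theory Submission imports Defs begin

text \<open>
  Since (Re z)^2 = (|z|^2 + Re (z^2))/2 and realify turns the real inner product into
  Re <x, v>, the realified frame is tight iff the complex quadratic form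
  Q x = sum_j <x, v_j>^2 has real part a constant multiple of |x|^2. As Q (c x) = c^2 Q x,
  testing with c = i and c = 1 + i then forces Q = 0. Writing Q x = sum_(a,b) M_ab x_a x_b,
  one has sum_(j,k) <v_j, v_k>^2 = sum_(a,b) |M_ab|^2, so Q = 0 iff that double sum vanishes.
  For part (1), tightness of the real parts at x and at i x gives equal multiples of |x|^2
  for the real and the imaginary parts, whose sum is the complex frame sum.
\<close>

lemma cinner_scale_left: "cinner (c *s x) u = c * cinner x u"
  by (simp add: cinner_def sum_distrib_left mult_ac)

lemma power2_norm_complex_vec: "(norm (x :: complex ^ 'd))\<^sup>2 = (\<Sum>i\<in>UNIV. (cmod (x $ i))\<^sup>2)"
  by (simp add: norm_vec_def L2_set_def sum_nonneg)

lemma power2_norm_scale_unit: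
  fixes x :: "complex ^ 'd"
  assumes "cmod c = 1"
  shows "(norm (c *s x))\<^sup>2 = (norm x)\<^sup>2"
  using assms by (simp add: power2_norm_complex_vec norm_mult power_mult_distrib)

lemma Re_cinner_self: "Re (cinner x x) = (norm x)\<^sup>2"
  unfolding power2_norm_complex_vec cinner_def cmod_power2 by (simp add: power2_eq_square)

lemma inner_realify: "realify x \<bullet> realify u = Re (cinner x u)"
proof -
  have "realify x \<bullet> realify u = (\<Sum>i\<in>UNIV <+> UNIV. realify x $ i * realify u $ i)"
    by (simp add: inner_vec_def)
  also have "\<dots> = (\<Sum>j\<in>UNIV. Re (x $ j) * Re (u $ j)) + (\<Sum>j\<in>UNIV. Im (x $ j) * Im (u $ j))"
    by (subst sum.Plus) (auto simp: realify_def)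
  also have "\<dots> = Re (cinner x u)"
    by (simp add: cinner_def Re_sum sum.distrib[symmetric] algebra_simps)
  finally show ?thesis .
qed

lemma power2_norm_realify: "(norm (realify x))\<^sup>2 = (norm x)\<^sup>2"
  by (simp add: power2_norm_eq_inner inner_realify Re_cinner_self)

lemma surj_realify: "surj (realify :: complex ^ 'd \<Rightarrow> real ^ ('d + 'd))"
proof (rule surjI)
  show "realify (\<chi> j. Complex (y $ Inl j) (y $ Inr j)) = y" for y :: "real ^ ('d::finite + 'd)"
    by (simp add: vec_eq_iff realify_def split: sum.split)
qed

lemma tight_frame_R_realify_iff:
  "tight_frame_R n (\<lambda>j. realify (v j)) \<longleftrightarrow>
     (\<exists>B>0. \<forall>x. B * (norm x)\<^sup>2 = (\<Sum>j<n. (Re (cinner x (v j)))\<^sup>2))"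
proof -
  have all_realify: "(\<forall>y :: real ^ ('d::finite + 'd). P y) \<longleftrightarrow> (\<forall>x. P (realify x))" for P
    using surj_realify by (metis surjD)
  have "tight_frame_R n (\<lambda>j. realify (v j)) \<longleftrightarrow>
      (\<exists>B>0. \<forall>x. B * (norm (realify x))\<^sup>2 = (\<Sum>j<n. \<bar>realify x \<bullet> realify (v j)\<bar>\<^sup>2))"
    unfolding tight_frame_R_def by (simp only: all_realify)
  then show ?thesis
    by (simp add: inner_realify power2_norm_realify)
qed

definition frame_quadratic_form :: "nat \<Rightarrow> (nat \<Rightarrow> complex ^ 'd) \<Rightarrow> complex ^ 'd \<Rightarrow> complex" where
  "frame_quadratic_form n v x = (\<Sum>j<n. (cinner x (v j))\<^sup>2)"

definition frame_quadratic_coeff :: "nat \<Rightarrow> (nat \<Rightarrow> complex ^ 'd) \<Rightarrow> 'd \<Rightarrow> 'd \<Rightarrow> complex" where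
  "frame_quadratic_coeff n v a b = (\<Sum>j<n. cnj (v j $ a) * cnj (v j $ b))"

lemma frame_quadratic_form_scale:
  "frame_quadratic_form n v (c *s x) = c\<^sup>2 * frame_quadratic_form n v x"
  by (simp add: frame_quadratic_form_def cinner_scale_left power_mult_distrib sum_distrib_left)

lemma sum_Re_cinner_squared:
  "(\<Sum>j<n. (Re (cinner x (v j)))\<^sup>2) =
     ((\<Sum>j<n. (cmod (cinner x (v j)))\<^sup>2) + Re (frame_quadratic_form n v x)) / 2"
proof -
  have Re_sq: "(Re z)\<^sup>2 = ((cmod z)\<^sup>2 + Re (z\<^sup>2)) / 2" for z
    by (simp add: cmod_power2 Re_power2)
  show ?thesis
    by (simp add: Re_sq frame_quadratic_form_def Re_sum sum_divide_distrib sum.distrib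
        add_divide_distrib)
qed

lemma frame_quadratic_form_eq_coeff_sum:
  "frame_quadratic_form n v x =
     (\<Sum>a\<in>UNIV. \<Sum>b\<in>UNIV. frame_quadratic_coeff n v a b * x $ a * x $ b)"
proof -
  have "frame_quadratic_form n v x =
      (\<Sum>j<n. \<Sum>a\<in>UNIV. \<Sum>b\<in>UNIV. cnj (v j $ a) * cnj (v j $ b) * x $ a * x $ b)"
    by (simp add: frame_quadratic_form_def cinner_def power2_eq_square sum_product mult_ac)
  also have "\<dots> = (\<Sum>a\<in>UNIV. \<Sum>b\<in>UNIV. \<Sum>j<n. cnj (v j $ a) * cnj (v j $ b) * x $ a * x $ b)"
    by (subst sum.swap) (rule sum.cong[OF refl], rule sum.swap)
  finally show ?thesis
    by (simp add: frame_quadratic_coeff_def sum_distrib_right)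
qed

lemma sum_cinner_squared_eq_coeff_norms:
  "(\<Sum>j<n. \<Sum>k<n. (cinner (v j) (v k))\<^sup>2) =
     of_real (\<Sum>a\<in>UNIV. \<Sum>b\<in>UNIV. (cmod (frame_quadratic_coeff n v a b))\<^sup>2)"
proof -
  define f where "f j k a b = cnj (v k $ a) * cnj (v k $ b) * v j $ a * v j $ b" for j k a b
  have "(\<Sum>j<n. \<Sum>k<n. (cinner (v j) (v k))\<^sup>2) = (\<Sum>j<n. \<Sum>k<n. \<Sum>a\<in>UNIV. \<Sum>b\<in>UNIV. f j k a b)"
    by (simp add: f_def cinner_def power2_eq_square sum_product mult_ac)
  also have "\<dots> = (\<Sum>a\<in>UNIV. \<Sum>j<n. \<Sum>k<n. \<Sum>b\<in>UNIV. f j k a b)"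
    by (subst sum.swap) (rule sum.cong[OF refl], rule sum.swap)
  also have "\<dots> = (\<Sum>a\<in>UNIV. \<Sum>b\<in>UNIV. \<Sum>j<n. \<Sum>k<n. f j k a b)"
    by (intro sum.cong refl) (subst sum.swap, rule sum.cong[OF refl], rule sum.swap)
  also have "\<dots> = (\<Sum>a\<in>UNIV. \<Sum>b\<in>UNIV.
      frame_quadratic_coeff n v a b * cnj (frame_quadratic_coeff n v a b))"
    by (simp add: f_def frame_quadratic_coeff_def cnj_sum sum_product mult_ac)
  finally show ?thesis
    by (simp only: of_real_sum complex_norm_square)
qed

lemma frame_quadratic_form_zero_iff:
  "(\<forall>x. frame_quadratic_form n v x = 0) \<longleftrightarrow> (\<Sum>j<n. \<Sum>k<n. (cinner (v j) (v k))\<^sup>2) = 0"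
proof
  assume "\<forall>x. frame_quadratic_form n v x = 0"
  then show "(\<Sum>j<n. \<Sum>k<n. (cinner (v j) (v k))\<^sup>2) = 0"
    by (simp add: frame_quadratic_form_def)
next
  assume "(\<Sum>j<n. \<Sum>k<n. (cinner (v j) (v k))\<^sup>2) = 0"
  then have "(\<Sum>a\<in>UNIV. \<Sum>b\<in>UNIV. (cmod (frame_quadratic_coeff n v a b))\<^sup>2) = 0"
    by (simp only: sum_cinner_squared_eq_coeff_norms of_real_eq_0_iff)
  then have "frame_quadratic_coeff n v a b = 0" for a b
    by (simp add: sum_nonneg sum_nonneg_eq_0_iff)
  then show "\<forall>x. frame_quadratic_form n v x = 0"
    by (simp add: frame_quadratic_form_eq_coeff_sum)
qed

lemma quadratic_form_zero_if_Re_multiple_of_norm: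
  fixes q :: "complex ^ 'd \<Rightarrow> complex"
  assumes scale: "\<And>c x. q (c *s x) = c\<^sup>2 * q x"
    and Re_q: "\<And>x. Re (q x) = C * (norm x)\<^sup>2"
  shows "q x = 0"
proof -
  have Re_zero: "Re (q y) = 0" for y
    using Re_q[of y] Re_q[of "\<i> *s y"] scale[of \<i> y] power2_norm_scale_unit[of \<i> y] by simp
  have "(1 + \<i>)\<^sup>2 = 2 * \<i>"
    by (simp add: power2_eq_square algebra_simps)
  then have "Im (q x) = 0"
    using Re_zero[of "(1 + \<i>) *s x"] scale[of "1 + \<i>" x] by simp
  then show ?thesis
    using Re_zero[of x] by (simp add: complex_eq_iff)
qed

lemma tight_frame_C_if_realify_tight:
  assumes "tight_frame_R n (\<lambda>j. realify (v j))"
  shows "tight_frame_C n v"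
proof -
  obtain B where "B > 0" and B: "\<And>x. B * (norm x)\<^sup>2 = (\<Sum>j<n. (Re (cinner x (v j)))\<^sup>2)"
    using assms unfolding tight_frame_R_realify_iff by blast
  have Im_sum: "B * (norm x)\<^sup>2 = (\<Sum>j<n. (Im (cinner x (v j)))\<^sup>2)" for x
    using B[of "\<i> *s x"] power2_norm_scale_unit[of \<i> x] by (simp add: cinner_scale_left)
  have "2 * B * (norm x)\<^sup>2 = (\<Sum>j<n. (cmod (cinner x (v j)))\<^sup>2)" for x
    using B[of x] Im_sum[of x] by (simp add: cmod_power2 sum.distrib)
  then show ?thesis
    unfolding tight_frame_C_def using \<open>B > 0\<close> by (intro exI[of _ "2 * B"]) simp
qed

lemma realify_tight_iff_frame_quadratic_form_zero:
  assumes "tight_frame_C n v"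
  shows "tight_frame_R n (\<lambda>j. realify (v j)) \<longleftrightarrow> (\<forall>x. frame_quadratic_form n v x = 0)"
proof -
  obtain A where "A > 0" and A: "\<And>x. A * (norm x)\<^sup>2 = (\<Sum>j<n. (cmod (cinner x (v j)))\<^sup>2)"
    using assms unfolding tight_frame_C_def by blast
  show ?thesis
  proof
    assume "tight_frame_R n (\<lambda>j. realify (v j))"
    then obtain B where B: "\<And>x. B * (norm x)\<^sup>2 = (\<Sum>j<n. (Re (cinner x (v j)))\<^sup>2)"
      unfolding tight_frame_R_realify_iff by blast
    have "Re (frame_quadratic_form n v x) = (2 * B - A) * (norm x)\<^sup>2" for x
      using B[of x] A[of x] by (simp add: sum_Re_cinner_squared algebra_simps)
    then show "\<forall>x. frame_quadratic_form n v x = 0"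
      using quadratic_form_zero_if_Re_multiple_of_norm frame_quadratic_form_scale by blast
  next
    assume "\<forall>x. frame_quadratic_form n v x = 0"
    then show "tight_frame_R n (\<lambda>j. realify (v j))"
      unfolding tight_frame_R_realify_iff using \<open>A > 0\<close> A
      by (intro exI[of _ "A / 2"]) (simp add: sum_Re_cinner_squared)
  qed
qed

lemma sum_cinner_squared_eq_0_iff:
  fixes v :: "nat \<Rightarrow> complex ^ 'd"
  shows "(\<Sum>j<n. \<Sum>k<n. (cinner (v j) (v k))\<^sup>2) = 0 \<longleftrightarrow>
     (\<Sum>j<n. \<Sum>k<n. (Re (cinner (v j) (v k)))\<^sup>2) = (\<Sum>j<n. \<Sum>k<n. (Im (cinner (v j) (v k)))\<^sup>2)"
  (is "?S = 0 \<longleftrightarrow> _")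
proof -
  have "Im ?S = 0"
    using sum_cinner_squared_eq_coeff_norms[of v n] by simp
  moreover have "Re ?S = (\<Sum>j<n. \<Sum>k<n. (Re (cinner (v j) (v k)))\<^sup>2)
                        - (\<Sum>j<n. \<Sum>k<n. (Im (cinner (v j) (v k)))\<^sup>2)"
    by (simp add: Re_sum Re_power2 sum_subtractf)
  ultimately show ?thesis
    by (simp add: complex_eq_iff)
qed

theorem theorem8:
  fixes v :: "nat \<Rightarrow> complex ^ 'd" and n :: nat
  shows "(tight_frame_R n (\<lambda>j. realify (v j)) \<longrightarrow> tight_frame_C n v)
    \<and> (tight_frame_C n v \<longrightarrow>
        ((tight_frame_R n (\<lambda>j. realify (v j)) \<longleftrightarrow>
            (\<Sum>j<n. \<Sum>k<n. (cinner (v j) (v k))\<^sup>2) = 0)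
       \<and> (tight_frame_R n (\<lambda>j. realify (v j)) \<longleftrightarrow>
            (\<Sum>j<n. \<Sum>k<n. (Re (cinner (v j) (v k)))\<^sup>2) =
            (\<Sum>j<n. \<Sum>k<n. (Im (cinner (v j) (v k)))\<^sup>2))))"
  using tight_frame_C_if_realify_tight realify_tight_iff_frame_quadratic_form_zero
    frame_quadratic_form_zero_iff sum_cinner_squared_eq_0_iff
  by metis

end
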